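(* Let $(X,d)$ be a metric space, $q_1,q_2>0$, $D>0$, and suppose that for each pair $x,y\in X$ there is a path $\eta_{xy}=\eta(x,y):[0,1]\to X$ from $x$ to $y$ satisfying (G1) $\mathrm{diam}(\eta_{xy})\le \frac{D\,d(x,y)}{2}$, (G2) $d_{\mathrm{Haus}}(\eta_{xy}([s,t]),\eta(\eta_{xy}(s),\eta_{xy}(t)))\le D$ for all $0\le s\le t\le1$, and (G3) $\eta_{xy}\subset\mathcal{N}_D(\eta_{xz}\cup\eta_{zy})$ for all $x,y,z\in X$. Let $n\in\mathbb{N}$ and let $\lambda:[0,2^n]\to X$ be a $(q_1,q_2)$-coarsely Lipschitz path. Then $$\eta(\lambda(0),\lambda(2^n))\subset \mathcal{N}_{\,nD+\frac12(q_1+q_2)D}\big(\lambda([0,2^n])\big),$$ i.e. $\eta(\lambda(0),\lambda(2^n))$ lies in the $\big(D\log_2\ell(\lambda)+\tfrac12(q_1+q_2)D\big)$-neighbourhood of $\lambda$, where $\ell(\lambda)=2^n$.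
   Context: A map $\lambda:[a,b]\to X$ is $(q_1,q_2)$-coarsely Lipschitz if $d(\lambda(s),\lambda(t))\le q_1|s-t|+q_2$ for all $s,t$. For $A\subset X$ and $r\ge0$, $\mathcal{N}_r(A)=\{p\in X: d(p,A)\le r\}$; $d_{\mathrm{Haus}}$ is Hausdorff distance; paths are identified with their images. For a path $\lambda:[0,m]\to X$, $\ell(\lambda)=m$ is its parametrisation length. *)

theory Defs
  imports "HOL-Analysis.Analysis"
begin

definition nbhd :: "real \<Rightarrow> 'a::metric_space set \<Rightarrow> 'a set" where
  "nbhd r A = {p. infdist p A \<le> r}"

definition coarsely_lipschitz_on :: "real \<Rightarrow> real \<Rightarrow> real set \<Rightarrow> (real \<Rightarrow> 'a::metric_space) \<Rightarrow> bool" where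
  "coarsely_lipschitz_on q1 q2 I lam \<longleftrightarrow>
     (\<forall>s\<in>I. \<forall>t\<in>I. dist (lam s) (lam t) \<le> q1 * \<bar>s - t\<bar> + q2)"

text \<open>diam(S) \<le> c, written out (avoids the library convention diameter = 0 for unbounded sets).\<close>
definition diam_le :: "'a::metric_space set \<Rightarrow> real \<Rightarrow> bool" where
  "diam_le S c \<longleftrightarrow> (\<forall>x\<in>S. \<forall>y\<in>S. dist x y \<le> c)"

text \<open>Hausdorff distance d_Haus(A,B) \<le> c, written out (for nonempty A, B).\<close>
definition haus_le :: "'a::metric_space set \<Rightarrow> 'a set \<Rightarrow> real \<Rightarrow> bool" where
  "haus_le A B c \<longleftrightarrow> (\<forall>a\<in>A. infdist a B \<le> c) \<and> (\<forall>b\<in>B. infdist b A \<le> c)"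

end

theory Submission
  imports Defs
begin

text \<open>Split \<open>\<lambda>\<close> at the midpoint of its domain. By (G3), \<open>\<eta>(\<lambda>(0),\<lambda>(2\<^sup>n))\<close> lies in the
  \<open>D\<close>-neighbourhood of \<open>\<eta>(\<lambda>(0),\<lambda>(2\<^sup>n\<^sup>-\<^sup>1)) \<union> \<eta>(\<lambda>(2\<^sup>n\<^sup>-\<^sup>1),\<lambda>(2\<^sup>n))\<close>, and both halves of \<open>\<lambda>\<close> are again
  coarsely Lipschitz on an interval of length \<open>2\<^sup>n\<^sup>-\<^sup>1\<close>; so each halving costs \<open>D\<close>. After \<open>n\<close>
  halvings the endpoints are at distance at most \<open>q\<^sub>1 + q\<^sub>2\<close>, and (G1) puts the whole path within
  \<open>(q\<^sub>1 + q\<^sub>2) D / 2\<close> of its starting point.\<close>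

lemma nbhd_mono:
  fixes A :: "'a::metric_space set"
  assumes "A \<subseteq> B" "A \<noteq> {}"
  shows "nbhd r A \<subseteq> nbhd r B"
  unfolding nbhd_def using infdist_mono[OF assms] order_trans by blast

lemma nbhd_subset_nbhd_add:
  fixes S :: "'a::metric_space set"
  assumes "S \<noteq> {}" "S \<subseteq> nbhd r L"
  shows "nbhd D S \<subseteq> nbhd (D + r) L"
proof
  fix p assume p: "p \<in> nbhd D S"
  have "infdist p L - r \<le> dist p a" if "a \<in> S" for a
  proof -
    have "infdist p L \<le> infdist a L + dist p a" by (rule infdist_triangle)
    moreover have "infdist a L \<le> r" using that assms(2) by (auto simp: nbhd_def)
    ultimately show ?thesis by linarith
  qed
  then have "infdist p L - r \<le> (INF a\<in>S. dist p a)"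
    using assms(1) by (intro cINF_greatest) auto
  then have "infdist p L - r \<le> infdist p S"
    using assms(1) by (simp add: infdist_def)
  with p show "p \<in> nbhd (D + r) L" by (simp add: nbhd_def)
qed

lemma diam_le_subset_nbhd:
  fixes S :: "'a::metric_space set"
  assumes "diam_le S c" "x \<in> S" "x \<in> A"
  shows "S \<subseteq> nbhd c A"
  using assms by (auto simp: diam_le_def nbhd_def intro: infdist_le2)

lemma coarsely_lipschitz_on_subset:
  "coarsely_lipschitz_on q1 q2 J lam \<Longrightarrow> I \<subseteq> J \<Longrightarrow> coarsely_lipschitz_on q1 q2 I lam"
  unfolding coarsely_lipschitz_on_def by blast

lemma coarsely_lipschitz_on_shift:
  assumes "coarsely_lipschitz_on q1 q2 ((\<lambda>t. t + c) ` I) lam"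
  shows "coarsely_lipschitz_on q1 q2 I (\<lambda>t. lam (t + c))"
  unfolding coarsely_lipschitz_on_def
proof (intro ballI)
  fix s t assume "s \<in> I" "t \<in> I"
  then have "dist (lam (s + c)) (lam (t + c)) \<le> q1 * \<bar>(s + c) - (t + c)\<bar> + q2"
    using assms unfolding coarsely_lipschitz_on_def by blast
  then show "dist (lam (s + c)) (lam (t + c)) \<le> q1 * \<bar>s - t\<bar> + q2" by simp
qed

lemma image_shift_atLeastAtMost_real:
  "(\<lambda>t. t + c) ` {a..b} = {a + c..b + c :: real}"
  by (simp add: add.commute)

lemma coarsely_lipschitz_on_dyadic_halves:
  assumes "coarsely_lipschitz_on q1 q2 {0..2 ^ Suc n} lam"
  shows "coarsely_lipschitz_on q1 q2 {0..2 ^ n} lam"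
    and "coarsely_lipschitz_on q1 q2 {0..2 ^ n} (\<lambda>t. lam (t + 2 ^ n))"
proof -
  have halves: "{0..2 ^ n} \<subseteq> {0..2 ^ Suc n :: real}" "{2 ^ n..2 ^ Suc n} \<subseteq> {0..2 ^ Suc n :: real}"
    by auto
  show "coarsely_lipschitz_on q1 q2 {0..2 ^ n} lam"
    using assms halves(1) by (rule coarsely_lipschitz_on_subset)
  show "coarsely_lipschitz_on q1 q2 {0..2 ^ n} (\<lambda>t. lam (t + 2 ^ n))"
    using coarsely_lipschitz_on_subset[OF assms halves(2)]
    by (intro coarsely_lipschitz_on_shift) (simp add: image_shift_atLeastAtMost_real)
qed

lemma path_subset_nbhd_via_midpoint:
  fixes \<eta> :: "'a::metric_space \<Rightarrow> 'a \<Rightarrow> real \<Rightarrow> 'a"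
  assumes G3: "\<And>x y z. \<eta> x y ` {0..1} \<subseteq> nbhd D (\<eta> x z ` {0..1} \<union> \<eta> z y ` {0..1})"
    and "\<eta> x z ` {0..1} \<subseteq> nbhd r L" "\<eta> z y ` {0..1} \<subseteq> nbhd r L"
  shows "\<eta> x y ` {0..1} \<subseteq> nbhd (D + r) L"
proof -
  have "\<eta> x z ` {0..1} \<union> \<eta> z y ` {0..1} \<subseteq> nbhd r L" using assms(2,3) by (rule Un_least)
  then have "nbhd D (\<eta> x z ` {0..1} \<union> \<eta> z y ` {0..1}) \<subseteq> nbhd (D + r) L"
    by (intro nbhd_subset_nbhd_add) auto
  with G3 show ?thesis by (rule order_trans)
qed

lemma path_subset_nbhd_of_dyadic_path:
  fixes \<eta> :: "'a::metric_space \<Rightarrow> 'a \<Rightarrow> real \<Rightarrow> 'a"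
  assumes D: "D \<ge> 0"
    and start: "\<And>x y. \<eta> x y 0 = x"
    and G1: "\<And>x y. diam_le (\<eta> x y ` {0..1}) (D * dist x y / 2)"
    and G3: "\<And>x y z. \<eta> x y ` {0..1} \<subseteq> nbhd D (\<eta> x z ` {0..1} \<union> \<eta> z y ` {0..1})"
    and lip: "coarsely_lipschitz_on q1 q2 {0..2 ^ n} lam"
  shows "\<eta> (lam 0) (lam (2 ^ n)) ` {0..1}
           \<subseteq> nbhd (real n * D + (q1 + q2) * D / 2) (lam ` {0..2 ^ n})"
  using lip
proof (induction n arbitrary: lam)
  case 0
  have "dist (lam 0) (lam 1) \<le> q1 * \<bar>0 - 1\<bar> + q2"
    using "0" unfolding coarsely_lipschitz_on_def by (metis atLeastAtMost_iff order_refl power_0 zero_le_one)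
  then have "dist (lam 0) (lam 1) \<le> q1 + q2" by simp
  with D have "D * dist (lam 0) (lam 1) / 2 \<le> (q1 + q2) * D / 2"
    by (simp add: mult.commute mult_left_mono)
  with G1[of "lam 0" "lam 1"] have "diam_le (\<eta> (lam 0) (lam 1) ` {0..1}) ((q1 + q2) * D / 2)"
    by (fastforce simp: diam_le_def)
  moreover have "lam 0 \<in> \<eta> (lam 0) (lam 1) ` {0..1}"
    by (rule image_eqI[of _ _ 0]) (simp_all add: start)
  ultimately show ?case by (simp add: diam_le_subset_nbhd)
next
  case (Suc n)
  let ?L = "lam ` {0..2 ^ Suc n}"
  let ?r = "real n * D + (q1 + q2) * D / 2"
  note halves = coarsely_lipschitz_on_dyadic_halves[OF Suc.prems]
  have "nbhd ?r (lam ` {0..2 ^ n}) \<subseteq> nbhd ?r ?L"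
    by (rule nbhd_mono) auto
  with Suc.IH[OF halves(1)]
  have first: "\<eta> (lam 0) (lam (2 ^ n)) ` {0..1} \<subseteq> nbhd ?r ?L"
    by (rule order_trans)
  have "(\<lambda>t. lam (t + 2 ^ n)) ` {0..2 ^ n} = lam ` ((\<lambda>t. t + 2 ^ n) ` {0..2 ^ n})"
    by (rule image_image[symmetric])
  also have "\<dots> = lam ` {0 + 2 ^ n..2 ^ n + 2 ^ n}"
    by (simp only: image_shift_atLeastAtMost_real)
  finally have "nbhd ?r ((\<lambda>t. lam (t + 2 ^ n)) ` {0..2 ^ n}) \<subseteq> nbhd ?r ?L"
    by (intro nbhd_mono) auto
  with Suc.IH[OF halves(2)]
  have "\<eta> (lam (0 + 2 ^ n)) (lam (2 ^ n + 2 ^ n)) ` {0..1} \<subseteq> nbhd ?r ?L"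
    by (rule order_trans)
  then have second: "\<eta> (lam (2 ^ n)) (lam (2 ^ Suc n)) ` {0..1} \<subseteq> nbhd ?r ?L"
    by (simp only: add_0 mult_2[symmetric] power_Suc)
  have "\<eta> (lam 0) (lam (2 ^ Suc n)) ` {0..1} \<subseteq> nbhd (D + ?r) ?L"
    using G3 first second by (rule path_subset_nbhd_via_midpoint)
  then show ?case by (simp add: algebra_simps)
qed

theorem mainTheorem4:
  fixes \<eta> :: "'a::metric_space \<Rightarrow> 'a \<Rightarrow> real \<Rightarrow> 'a"
    and lam :: "real \<Rightarrow> 'a"
    and q1 q2 D :: real and n :: nat
  assumes q1: "q1 > 0" and q2: "q2 > 0" and D: "D > 0"
    and start: "\<And>x y. \<eta> x y 0 = x"
    and finish: "\<And>x y. \<eta> x y 1 = y"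
    and G1: "\<And>x y. diam_le (\<eta> x y ` {0..1}) (D * dist x y / 2)"
    and G2: "\<And>x y s t. 0 \<le> s \<Longrightarrow> s \<le> t \<Longrightarrow> t \<le> 1 \<Longrightarrow>
               haus_le (\<eta> x y ` {s..t}) (\<eta> (\<eta> x y s) (\<eta> x y t) ` {0..1}) D"
    and G3: "\<And>x y z. \<eta> x y ` {0..1} \<subseteq> nbhd D (\<eta> x z ` {0..1} \<union> \<eta> z y ` {0..1})"
    and lip: "coarsely_lipschitz_on q1 q2 {0..2 ^ n} lam"
  shows "\<eta> (lam 0) (lam (2 ^ n)) ` {0..1}
           \<subseteq> nbhd (real n * D + (q1 + q2) * D / 2) (lam ` {0..2 ^ n})"
  using D start G1 G3 lip by (intro path_subset_nbhd_of_dyadic_path) auto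

end
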